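(* Let $x_s<x_t$ be integers, let $C\ge 0$, and let $f:[x_s,x_t]\to\mathbb{R}$ be such that $([x_s,x_t],f)$ is an Ameso($C$) pair. Suppose there exist $x^0\in[x_s,x_t]$ and a positive integer $b$ with $[x^0-b,x^0]\subseteq[x_s,x_t]$ such that $f(x^0)=\min_{y\in[x^0-b,x_t]}f(y)$ and $f(x^0)+C\le \max_{y\in[x^0-b,x^0]}f(y)$. Then $f(x^0)=\min_{y\in[x_s,x_t]}f(y)$.
   Context: For integers $a\le b$, $[a,b]$ denotes the set of integers $\{a,a+1,\dots,b\}$. Floors and ceilings of vectors are taken componentwise. A set $D^n\subseteq\mathbb{Z}^n$ is an Ameso set if $\lceil(\vec x+\vec y)/2\rceil,\lfloor(\vec x+\vec y)/2\rfloor\in D^n$ for all $\vec x,\vec y\in D^n$. For $C\ge 0$, $(D^n,f)$ is an Ameso($C$) pair if $D^n$ is an Ameso set, $f:D^n\to\mathbb{R}$ is bounded below, and $f(\vec x)+f(\vec y)+C\ge f(\lceil(\vec x+\vec y)/2\rceil)+f(\lfloor(\vec x+\vec y)/2\rfloor)$ for all $\vec x,\vec y\in D^n$. *)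

theory Defs
  imports Complex_Main
begin

definition ameso_set :: "int set \<Rightarrow> bool" where
  "ameso_set D \<longleftrightarrow> (\<forall>x\<in>D. \<forall>y\<in>D.
     \<lceil>real_of_int (x + y) / 2\<rceil> \<in> D \<and> \<lfloor>real_of_int (x + y) / 2\<rfloor> \<in> D)"

definition ameso_pair :: "int set \<Rightarrow> (int \<Rightarrow> real) \<Rightarrow> real \<Rightarrow> bool" where
  "ameso_pair D f C \<longleftrightarrow> ameso_set D \<and> bdd_below (f ` D) \<and>
     (\<forall>x\<in>D. \<forall>y\<in>D. f x + f y + C \<ge>
        f \<lceil>real_of_int (x + y) / 2\<rceil> + f \<lfloor>real_of_int (x + y) / 2\<rfloor>)"

end

theory Submission
  imports Defs
begin

text \<open>Suppose some \<open>z < x0 - b\<close> had \<open>f z < f x0\<close>. On \<open>[z, x0]\<close> both endpoints are then at most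
  \<open>f x0\<close>, while some point strictly between them reaches \<open>f x0 + C\<close>. This is impossible for
  a function that is midpoint convex up to \<open>C\<close>: at the leftmost maximiser \<open>q\<close> of \<open>[z, x0]\<close>,
  reflecting one endpoint through \<open>q\<close> stays inside the interval, and the midpoint inequality
  for that endpoint and its mirror image forces the endpoint value above \<open>f q - C \<ge> f x0\<close>.\<close>

lemma ameso_pair_midpoint:
  assumes "ameso_pair D f C" "x \<in> D" "y \<in> D" "x + y = 2 * q"
  shows "2 * f q \<le> f x + f y + C"
proof -
  have "real_of_int (x + y) / 2 = real_of_int q"
    using assms(4) by simp
  then show ?thesis
    using assms(1-3) unfolding ameso_pair_def by fastforce
qed

lemma finite_ex_leftmost_maximizer:
  fixes f :: "'a :: linorder \<Rightarrow> 'b :: linorder"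
  assumes "finite S" "S \<noteq> {}"
  obtains q where "q \<in> S" "\<And>z. z \<in> S \<Longrightarrow> f z \<le> f q" "\<And>z. z \<in> S \<Longrightarrow> z < q \<Longrightarrow> f z < f q"
proof -
  define A where "A = {q \<in> S. f q = Max (f ` S)}"
  have "Max (f ` S) \<in> f ` S"
    using assms by simp
  then have "finite A" "A \<noteq> {}"
    using assms(1) by (auto simp: A_def)
  then have "Min A \<in> S" "f (Min A) = Max (f ` S)" "\<And>z. z \<in> A \<Longrightarrow> Min A \<le> z"
    using Min_in[of A] by (auto simp: A_def)
  moreover have "f z \<le> Max (f ` S)" if "z \<in> S" for z
    using assms that by simp
  ultimately show ?thesis
    by (intro that[of "Min A"]) (auto simp: A_def intro: order.strict_iff_order[THEN iffD2] dest: leD)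
qed

lemma midpoint_convex_interior_less:
  fixes f :: "int \<Rightarrow> real"
  assumes mid: "\<And>x y q. x \<in> {a..c} \<Longrightarrow> y \<in> {a..c} \<Longrightarrow> x + y = 2 * q \<Longrightarrow>
      2 * f q \<le> f x + f y + C"
    and "C \<ge> 0" "f a < v" "f c \<le> v" "p \<in> {a<..<c}"
  shows "f p < v + C"
proof (rule ccontr)
  assume "\<not> f p < v + C"
  obtain q where q: "q \<in> {a..c}" and le_q: "\<And>z. z \<in> {a..c} \<Longrightarrow> f z \<le> f q"
    and left_less_q: "\<And>z. z \<in> {a..c} \<Longrightarrow> z < q \<Longrightarrow> f z < f q"
    using finite_ex_leftmost_maximizer[of "{a..c}" f] assms(5) by auto
  have high: "v + C \<le> f q"
    using \<open>\<not> f p < v + C\<close> le_q[of p] assms(5) by auto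
  then have "a < q"
    using q assms(2,3) by (cases "q = a") auto
  have "q < c"
  proof (rule ccontr)
    assume "\<not> q < c"
    then have "q = c" using q by simp
    then show False
      using \<open>\<not> f p < v + C\<close> left_less_q[of p] high assms(2,4,5) by auto
  qed
  show False
  proof (cases "2 * q - a \<le> c")
    case True
    then have "2 * f q \<le> f a + f (2 * q - a) + C"
      using mid[of a "2 * q - a" q] \<open>a < q\<close> by auto
    then show False
      using le_q[of "2 * q - a"] True \<open>a < q\<close> high assms(3) by auto
  next
    case False
    then have "2 * f q \<le> f (2 * q - c) + f c + C"
      using mid[of "2 * q - c" c q] \<open>q < c\<close> by auto
    then show False
      using left_less_q[of "2 * q - c"] False \<open>q < c\<close> high assms(4) by auto
  qed
qed

lemma ex_left_point_above_last:
  fixes f :: "int \<Rightarrow> real"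
  assumes "a < c" "C \<ge> 0" "f c + C \<le> Max (f ` {a..c})" "f c \<le> f (c - 1)"
  obtains p where "p \<in> {a..<c}" "f c + C \<le> f p"
proof -
  obtain m where m: "m \<in> {a..c}" "f m = Max (f ` {a..c})"
    using Max_in[of "f ` {a..c}"] assms(1) by fastforce
  show ?thesis
  proof (cases "m = c")
    case True
    then have "C = 0"
      using m assms(2,3) by simp
    then show ?thesis
      using that[of "c - 1"] assms(1,4) by auto
  next
    case False
    then show ?thesis
      using that[of m] m assms(3) by auto
  qed
qed

theorem theorem2:
  fixes xs xt x0 b :: int and C :: real and f :: "int \<Rightarrow> real"
  assumes "xs < xt"
    and "C \<ge> 0"
    and "ameso_pair {xs..xt} f C"
    and "x0 \<in> {xs..xt}"
    and "b > 0"
    and "{x0 - b..x0} \<subseteq> {xs..xt}"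
    and "f x0 = Min (f ` {x0 - b..xt})"
    and "f x0 + C \<le> Max (f ` {x0 - b..x0})"
  shows "f x0 = Min (f ` {xs..xt})"
proof -
  have min_right: "f x0 \<le> f z" if "z \<in> {x0 - b..xt}" for z
    using assms(7) that by simp
  obtain p where p: "p \<in> {x0 - b..<x0}" "f x0 + C \<le> f p"
    using ex_left_point_above_last[of "x0 - b" x0 C f] min_right[of "x0 - 1"] assms(2,4,5,8)
    by auto
  have "f x0 \<le> f z" if z: "z \<in> {xs..xt}" for z
  proof (cases "x0 - b \<le> z")
    case True
    then show ?thesis using min_right z by simp
  next
    case False
    have sub: "{z..x0} \<subseteq> {xs..xt}" using z assms(4) by auto
    have "f p < f x0 + C" if "f z < f x0"
    proof (rule midpoint_convex_interior_less)
      show "2 * f q \<le> f x + f y + C" if "x \<in> {z..x0}" "y \<in> {z..x0}" "x + y = 2 * q" for x y q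
        using ameso_pair_midpoint[OF assms(3)] that sub by blast
    qed (use that p False assms(2) in auto)
    then have "\<not> f z < f x0"
      using p(2) by linarith
    then show ?thesis by simp
  qed
  then show ?thesis
    using assms(4) by (intro Min_eqI[symmetric]) auto
qed

end
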